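(* Let $d\ge1$, let $0\le\theta\le1$, and consider instances encoded as bipolar vectors $(x_1,\dots,x_d)\in\{1,-1\}^d$. Let a finite nonempty set of $k$ rules be given, each rule having as premise a nonempty conjunction of literals $x_i$ or $\neg x_i$ ($1\le i\le d$) and as conclusion the target class with a rule certainty factor $c\in(\theta,1]$. (An instance matches a rule if $x_i=1$ for each positive literal $x_i$ in its premise and $x_i=-1$ for each negated literal $\neg x_i$ in its premise.) Then there exists a multi-channel model with $k$ channels such that for every instance, the model output $M_{out}$ is $>\theta$ if the instance matches at least one of the given rules, and $M_{out}=0$ otherwise.
   Context: The CF-combining function: for a finite list of real arguments in $[-1,1]$, split them into the nonnegative ones $a_1,a_2,\dots$ and the negative ones $b_1,b_2,\dots$, and set $f_{\rm cf}=f^+_{\rm cf}(a_1,a_2,\dots)+f^-_{\rm cf}(b_1,b_2,\dots)$ where $f^+_{\rm cf}(a_1,a_2,\dots)=1-\prod_i(1-a_i)$ and $f^-_{\rm cf}(b_1,b_2,\dots)=-1+\prod_j(1+b_j)$ (empty products equal $1$). A multi-channel model with $k$ channels has, for each channel $j=1,\dots,k$, an output weight $u_j\in[0,1]$, a bias $w_{j0}\in[-1,1]$ and input weights $w_{j1},\dots,w_{jd}\in[-1,1]$. On input $(x_1,\dots,x_d)$, channel $j$ has activation $\phi_j=f_{\rm cf}(w_{j0},w_{j1}x_1,\dots,w_{jd}x_d)$ and influence $\psi_j=u_j\phi_j$, and the model output is $M_{out}=f_{\rm cf}(\psi_1,\dots,\psi_k)$. *)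

theory Defs
  imports Main "HOL.Real"
begin

definition f_cf_plus :: "real list \<Rightarrow> real" where
  "f_cf_plus as = 1 - prod_list (map (\<lambda>a. 1 - a) as)"

definition f_cf_minus :: "real list \<Rightarrow> real" where
  "f_cf_minus bs = -1 + prod_list (map (\<lambda>b. 1 + b) bs)"

definition f_cf :: "real list \<Rightarrow> real" where
  "f_cf xs = f_cf_plus (filter (\<lambda>a. 0 \<le> a) xs) + f_cf_minus (filter (\<lambda>b. b < 0) xs)"

text \<open>Multi-channel model with k channels over d inputs: channel j (j < k) has
  output weight u j, bias w j 0 and input weights w j 1, ..., w j d.
  Inputs x 1, ..., x d.\<close>
definition mc_valid :: "nat \<Rightarrow> nat \<Rightarrow> (nat \<Rightarrow> real) \<Rightarrow> (nat \<Rightarrow> nat \<Rightarrow> real) \<Rightarrow> bool" where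
  "mc_valid d k u w \<longleftrightarrow>
     (\<forall>j<k. 0 \<le> u j \<and> u j \<le> 1 \<and> (\<forall>i\<le>d. -1 \<le> w j i \<and> w j i \<le> 1))"

definition mc_activation :: "nat \<Rightarrow> (nat \<Rightarrow> nat \<Rightarrow> real) \<Rightarrow> nat \<Rightarrow> (nat \<Rightarrow> real) \<Rightarrow> real" where
  "mc_activation d w j x = f_cf (w j 0 # map (\<lambda>i. w j i * x i) [1..<Suc d])"

definition mc_out :: "nat \<Rightarrow> nat \<Rightarrow> (nat \<Rightarrow> real) \<Rightarrow> (nat \<Rightarrow> nat \<Rightarrow> real) \<Rightarrow> (nat \<Rightarrow> real) \<Rightarrow> real" where
  "mc_out d k u w x = f_cf (map (\<lambda>j. u j * mc_activation d w j x) [0..<k])"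

definition bipolar :: "nat \<Rightarrow> (nat \<Rightarrow> real) \<Rightarrow> bool" where
  "bipolar d x \<longleftrightarrow> (\<forall>i\<in>{1..d}. x i = 1 \<or> x i = -1)"

text \<open>A literal is (i, True) for x_i and (i, False) for \<not>x_i.\<close>
definition lit_ok :: "nat \<Rightarrow> nat \<times> bool \<Rightarrow> bool" where
  "lit_ok d l \<longleftrightarrow> 1 \<le> fst l \<and> fst l \<le> d"

definition matches :: "(nat \<times> bool) list \<Rightarrow> (nat \<Rightarrow> real) \<Rightarrow> bool" where
  "matches prem x \<longleftrightarrow> (\<forall>(i, b) \<in> set prem. x i = (if b then 1 else -1))"

end

theory Submission
  imports Defs
begin

text \<open>Channel j gets bias 1, input weight 1 on x_i for a literal x_i, -1 for a literal
  \<not>x_i, and 0 otherwise. On a bipolar instance every weighted input is then -1, 0 or 1,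
  and a -1 occurs exactly when a literal of the premise is violated; since a single -1 among
  the negative arguments forces the activation to 0, while the bias makes it 1 otherwise,
  channel j fires exactly on the instances matching rule j. A premise containing both x_i
  and \<not>x_i matches nothing but cannot be encoded this way, so its channel gets output
  weight 0. With the certainty factor as output weight, all influences lie in [0,1], and the
  CF-combination of such values dominates each of them and vanishes when they all do.\<close>

lemma f_cf_nonneg:
  assumes "\<forall>a\<in>set xs. 0 \<le> a"
  shows "f_cf xs = 1 - prod_list (map (\<lambda>a. 1 - a) xs)"
proof -
  have "filter (\<lambda>a. 0 \<le> a) xs = xs" using assms by (simp add: filter_id_conv)
  moreover have "filter (\<lambda>b. b < 0) xs = []" using assms by (auto simp: filter_empty_conv)
  ultimately show ?thesis by (simp add: f_cf_def f_cf_plus_def f_cf_minus_def)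
qed

lemma f_cf_all_zero:
  assumes "\<forall>a\<in>set xs. a = 0"
  shows "f_cf xs = 0"
proof -
  have "f_cf xs = 1 - prod_list (map (\<lambda>a. 1 - a) xs)" using assms by (intro f_cf_nonneg) auto
  also have "prod_list (map (\<lambda>a. 1 - a) xs) = 1" using assms by (induction xs) auto
  finally show ?thesis by simp
qed

lemma prod_list_le_member:
  fixes xs :: "real list"
  assumes "\<forall>y\<in>set xs. 0 \<le> y \<and> y \<le> 1" and "a \<in> set xs"
  shows "prod_list xs \<le> a"
  using assms
proof (induction xs)
  case Nil
  then show ?case by simp
next
  case (Cons y xs)
  have y: "0 \<le> y" "y \<le> 1" using Cons.prems(1) by auto
  have "prod_list xs \<le> 1"
    using Cons.prems(1) by (induction xs) (auto intro: mult_le_one prod_list_nonneg)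
  moreover have "0 \<le> prod_list xs" using Cons.prems(1) by (auto intro: prod_list_nonneg)
  moreover have "prod_list xs \<le> a" if "a \<noteq> y" using Cons that by simp
  ultimately show ?case
    using y Cons.prems(2) by (auto intro: mult_left_le order_trans[OF mult_left_le_one_le])
qed

lemma member_le_f_cf:
  assumes "\<forall>b\<in>set xs. 0 \<le> b \<and> b \<le> 1" and "a \<in> set xs"
  shows "a \<le> f_cf xs"
proof -
  have "prod_list (map (\<lambda>b. 1 - b) xs) \<le> 1 - a"
    using assms by (intro prod_list_le_member) auto
  then show ?thesis using assms(1) by (simp add: f_cf_nonneg)
qed

lemma f_cf_one_Cons_signs:
  assumes "set xs \<subseteq> {-1, 0, 1 :: real}"
  shows "f_cf (1 # xs) = (if -1 \<in> set xs then 0 else 1)"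
proof -
  have "prod_list (map (\<lambda>b. 1 + b) (filter (\<lambda>b. b < 0) xs)) = (if -1 \<in> set xs then 0 else 1)"
    using assms by (induction xs) auto
  then show ?thesis by (simp add: f_cf_def f_cf_plus_def f_cf_minus_def)
qed

definition literal_weight :: "(nat \<times> bool) list \<Rightarrow> nat \<Rightarrow> real" where
  "literal_weight prem i =
     (if (i, False) \<in> set prem then -1 else if (i, True) \<in> set prem then 1 else 0)"

definition contradictory :: "(nat \<times> bool) list \<Rightarrow> bool" where
  "contradictory prem \<longleftrightarrow> (\<exists>i. (i, True) \<in> set prem \<and> (i, False) \<in> set prem)"

lemma contradictory_not_matches:
  assumes "contradictory prem"
  shows "\<not> matches prem x"
proof
  assume match: "matches prem x"
  obtain i where "(i, True) \<in> set prem" "(i, False) \<in> set prem"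
    using assms unfolding contradictory_def by blast
  then have "x i = 1" "x i = -1" using match unfolding matches_def by fastforce+
  then show False by simp
qed

lemma bipolar_literal_weight_sign:
  assumes "bipolar d x" and "i \<in> {1..d}"
  shows "literal_weight prem i * x i \<in> {-1, 0, 1}"
  using assms by (auto simp: bipolar_def literal_weight_def)

lemma violated_literal_iff_not_matches:
  assumes bip: "bipolar d x" and lits: "\<forall>l\<in>set prem. lit_ok d l"
    and consistent: "\<not> contradictory prem"
  shows "(\<exists>i\<in>{1..d}. literal_weight prem i * x i = -1) \<longleftrightarrow> \<not> matches prem x"
proof
  assume "\<exists>i\<in>{1..d}. literal_weight prem i * x i = -1"
  then obtain i where "i \<in> {1..d}" "literal_weight prem i * x i = -1" by blast
  then have "(i, False) \<in> set prem \<and> x i = 1 \<or> (i, True) \<in> set prem \<and> x i = -1"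
    using bip by (auto simp: bipolar_def literal_weight_def split: if_splits)
  then show "\<not> matches prem x" unfolding matches_def by fastforce
next
  assume "\<not> matches prem x"
  then obtain i b where ib: "(i, b) \<in> set prem" "x i \<noteq> (if b then 1 else -1)"
    unfolding matches_def by auto
  then have i: "i \<in> {1..d}" using lits by (auto simp: lit_ok_def)
  with ib consistent bip have "literal_weight prem i * x i = -1"
    by (cases b) (auto simp: bipolar_def contradictory_def literal_weight_def)
  with i show "\<exists>i\<in>{1..d}. literal_weight prem i * x i = -1" by blast
qed

lemma rule_channel_activation:
  assumes "bipolar d x" and "\<forall>l\<in>set prem. lit_ok d l" and "\<not> contradictory prem"
  shows "f_cf (1 # map (\<lambda>i. literal_weight prem i * x i) [1..<Suc d])
           = (if matches prem x then 1 else 0)"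
proof -
  let ?xs = "map (\<lambda>i. literal_weight prem i * x i) [1..<Suc d]"
  have set_xs: "set ?xs = (\<lambda>i. literal_weight prem i * x i) ` {1..d}"
    by (simp only: set_map set_upt atLeastLessThanSuc_atLeastAtMost)
  have "set ?xs \<subseteq> {-1, 0, 1}"
    unfolding set_xs by (rule image_subsetI) (rule bipolar_literal_weight_sign[OF assms(1)])
  moreover have "-1 \<in> set ?xs \<longleftrightarrow> \<not> matches prem x"
    unfolding set_xs image_iff using violated_literal_iff_not_matches[OF assms] by metis
  ultimately show ?thesis by (simp only: f_cf_one_Cons_signs) simp
qed

definition rule_output_weight :: "((nat \<times> bool) list \<times> real) list \<Rightarrow> nat \<Rightarrow> real" where
  "rule_output_weight rules j =
     (if contradictory (fst (rules ! j)) then 0 else snd (rules ! j))"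

definition rule_input_weight :: "((nat \<times> bool) list \<times> real) list \<Rightarrow> nat \<Rightarrow> nat \<Rightarrow> real" where
  "rule_input_weight rules j i = (if i = 0 then 1 else literal_weight (fst (rules ! j)) i)"

lemma rule_model_valid:
  assumes "\<forall>r\<in>set rules. 0 \<le> snd r \<and> snd r \<le> 1"
  shows "mc_valid d (length rules) (rule_output_weight rules) (rule_input_weight rules)"
  using assms
  by (auto simp: mc_valid_def rule_output_weight_def rule_input_weight_def literal_weight_def)

lemma rule_model_influence:
  assumes "bipolar d x" and "j < length rules" and "\<forall>l\<in>set (fst (rules ! j)). lit_ok d l"
  shows "rule_output_weight rules j * mc_activation d (rule_input_weight rules) j x
           = (if matches (fst (rules ! j)) x then snd (rules ! j) else 0)"
proof (cases "contradictory (fst (rules ! j))")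
  case True
  then show ?thesis by (simp add: rule_output_weight_def contradictory_not_matches)
next
  case False
  have inputs: "map (\<lambda>i. rule_input_weight rules j i * x i) [1..<Suc d]
          = map (\<lambda>i. literal_weight (fst (rules ! j)) i * x i) [1..<Suc d]"
    by (intro map_cong) (auto simp: rule_input_weight_def)
  have "mc_activation d (rule_input_weight rules) j x
          = f_cf (1 # map (\<lambda>i. literal_weight (fst (rules ! j)) i * x i) [1..<Suc d])"
    unfolding mc_activation_def inputs by (simp add: rule_input_weight_def)
  also have "\<dots> = (if matches (fst (rules ! j)) x then 1 else 0)"
    by (rule rule_channel_activation[OF assms(1,3) False])
  finally show ?thesis using False by (simp add: rule_output_weight_def)
qed

lemma rule_model_out:
  assumes bip: "bipolar d x" and lits: "\<forall>r\<in>set rules. \<forall>l\<in>set (fst r). lit_ok d l"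
  shows "mc_out d (length rules) (rule_output_weight rules) (rule_input_weight rules) x
           = f_cf (map (\<lambda>r. if matches (fst r) x then snd r else 0) rules)"
proof -
  have influence: "rule_output_weight rules j * mc_activation d (rule_input_weight rules) j x
                     = (if matches (fst (rules ! j)) x then snd (rules ! j) else 0)"
    if j: "j < length rules" for j
    by (rule rule_model_influence[OF bip j]) (use lits nth_mem[OF j] in blast)
  have "map (\<lambda>j. rule_output_weight rules j * mc_activation d (rule_input_weight rules) j x)
            [0..<length rules]
          = map (\<lambda>j. if matches (fst (rules ! j)) x then snd (rules ! j) else 0) [0..<length rules]"
    by (intro map_cong) (simp_all add: influence)
  also have "\<dots> = map (\<lambda>r. if matches (fst r) x then snd r else 0) rules"
    by (subst map_nth[symmetric, of rules]) (simp only: map_map comp_def)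
  finally show ?thesis by (simp add: mc_out_def)
qed

theorem theorem2:
  fixes d :: nat and \<theta> :: real
    and rules :: "((nat \<times> bool) list \<times> real) list"
  assumes "1 \<le> d"
    and "0 \<le> \<theta>" and "\<theta> \<le> 1"
    and "rules \<noteq> []"
    and "\<forall>r \<in> set rules. fst r \<noteq> [] \<and> (\<forall>l \<in> set (fst r). lit_ok d l)
                          \<and> \<theta> < snd r \<and> snd r \<le> 1"
  shows "\<exists>u w. mc_valid d (length rules) u w \<and>
           (\<forall>x. bipolar d x \<longrightarrow>
              ((\<exists>r \<in> set rules. matches (fst r) x) \<longrightarrow> mc_out d (length rules) u w x > \<theta>) \<and>
              (\<not> (\<exists>r \<in> set rules. matches (fst r) x) \<longrightarrow> mc_out d (length rules) u w x = 0))"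
proof (intro exI conjI allI impI)
  let ?k = "length rules" and ?u = "rule_output_weight rules" and ?w = "rule_input_weight rules"
  have certainty: "\<theta> < snd r" "snd r \<le> 1" if "r \<in> set rules" for r
    using assms(5) that by auto
  show "mc_valid d ?k ?u ?w"
    using certainty assms(2) by (intro rule_model_valid) force
  fix x assume bip: "bipolar d x"
  define \<psi> where "\<psi> = map (\<lambda>r. if matches (fst r) x then snd r else 0) rules"
  have out: "mc_out d ?k ?u ?w x = f_cf \<psi>"
    unfolding \<psi>_def using rule_model_out[OF bip] assms(5) by blast
  show "mc_out d ?k ?u ?w x > \<theta>" if matched: "\<exists>r\<in>set rules. matches (fst r) x"
  proof -
    obtain r where r: "r \<in> set rules" "matches (fst r) x" using matched by blast
    have "snd r \<le> f_cf \<psi>"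
    proof (rule member_le_f_cf)
      show "\<forall>b\<in>set \<psi>. 0 \<le> b \<and> b \<le> 1"
        unfolding \<psi>_def using certainty assms(2) by fastforce
      show "snd r \<in> set \<psi>" unfolding \<psi>_def using r by force
    qed
    then show ?thesis using out certainty(1)[OF r(1)] by simp
  qed
  show "mc_out d ?k ?u ?w x = 0" if "\<not> (\<exists>r\<in>set rules. matches (fst r) x)"
    using that out f_cf_all_zero[of \<psi>] by (auto simp: \<psi>_def)
qed

end
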